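(* Let $\mathbb{H}\in\{\mathbb{R},\mathbb{C}\}$, let $A\in\mathbb{H}^{M\times N}$ be deterministic, let $x\in\mathbb{H}^N$, $e^z\in\mathbb{H}^M$, $e^y\in\mathbb{R}^M$ be random vectors, let $f:\mathbb{H}\to\mathbb{R}$ be measurable, and $y=f(Ax+e^z)+e^y$ (entrywise $f$). Let $\mathcal{T}:\mathbb{R}\to\mathbb{R}$ be a measurable preprocessing function applied entrywise, assume $\mathbb{E}[\mathcal{T}(y_m)^2]<\infty$ for all $m$ and $\mathbb{E}[\|x\|_2^4]<\infty$. Define $\overline{\mathcal{T}}(y)=\mathbb{E}[\mathcal{T}(y)]$, $K_x=\mathbb{E}[xx^H]$, $T=\mathbb{E}[(\mathcal{T}(y)-\overline{\mathcal{T}}(y))(\mathcal{T}(y)-\overline{\mathcal{T}}(y))^T]$, assume $T$ is full rank, let $t$ solve $Tt=\mathcal{T}(y)-\overline{\mathcal{T}}(y)$, $V_m=\mathbb{E}[(\mathcal{T}(y_m)-\overline{\mathcal{T}}(y_m))(xx^H-K_x)]$, and $D_y=K_x+\sum_{m=1}^Mt_mV_m$. Let $\hat x\in\mathbb{H}^N$ be a minimizer of $\|D_y-\tilde x\tilde x^H\|_F^2$ over $\tilde x\in\mathbb{H}^N$. Then $$\mathbb{E}\big[\|\hat x\hat x^H-xx^H\|_F^2\big]\le 4\,\mathbb{E}\big[\|D_y-xx^H\|_F^2\big].$$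
   Context: Expectations are taken jointly over $x$, $e^z$, $e^y$; $A$ is deterministic. For $\mathbb{H}=\mathbb{R}$, $H$ denotes transpose. $\|\cdot\|_F$ is the Frobenius norm. *)

theory Defs
  imports "HOL-Analysis.Analysis" "HOL-Probability.Probability"
begin

text \<open>The scalar field H is either R or C. We work with complex entries throughout;
  the real case is encoded by a flag requiring all H-valued data to be real.\<close>

definition Hset :: "bool \<Rightarrow> complex set" where
  "Hset realcase = (if realcase then \<real> else UNIV)"

definition Hvecs :: "bool \<Rightarrow> (complex^'n) set" where
  "Hvecs realcase = {v. \<forall>i. v $ i \<in> Hset realcase}"

definition Hmats :: "bool \<Rightarrow> (complex^'n^'m) set" where
  "Hmats realcase = {B. \<forall>i j. B $ i $ j \<in> Hset realcase}"

definition outer :: "complex^'n \<Rightarrow> complex^'n^'n" where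
  "outer v = (\<chi> i j. v $ i * cnj (v $ j))"

definition frob :: "complex^'n^'m \<Rightarrow> real" where
  "frob B = sqrt (\<Sum>i\<in>UNIV. \<Sum>j\<in>UNIV. (cmod (B $ i $ j))\<^sup>2)"

end

theory Submission
  imports Defs
begin

text \<open>Only the optimality of \<open>xhat\<close> enters: \<open>x\<close> itself is a feasible candidate, so
  \<open>\<parallel>D - xhat xhat\<^sup>H\<parallel> \<le> \<parallel>D - x x\<^sup>H\<parallel>\<close>, and the triangle inequality through \<open>D\<close> gives
  \<open>\<parallel>xhat xhat\<^sup>H - x x\<^sup>H\<parallel> \<le> 2 \<parallel>D - x x\<^sup>H\<parallel>\<close> pointwise; squaring and integrating yields the
  factor 4. The hypotheses do not make \<open>D\<close> measurable, so the constant is pulled out of the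
  nonnegative integral without any measurability assumption.\<close>

lemma frob_eq_norm: "frob B = norm B"
proof -
  have "(norm (B $ i))\<^sup>2 = (\<Sum>j\<in>UNIV. (cmod (B $ i $ j))\<^sup>2)" for i
    unfolding norm_vec_def L2_set_def by (rule real_sqrt_pow2) (simp add: sum_nonneg)
  then show ?thesis unfolding frob_def by (simp add: norm_vec_def L2_set_def)
qed

lemma norm_diff_power2_le_if_nearer:
  fixes d a b :: "'a::real_normed_vector"
  assumes nearer: "norm (d - a) \<le> norm (d - b)"
  shows "(norm (a - b))\<^sup>2 \<le> 4 * (norm (d - b))\<^sup>2"
proof -
  have "norm (a - b) = norm ((d - b) - (d - a))" by simp
  also have "\<dots> \<le> norm (d - b) + norm (d - a)" by (rule norm_triangle_ineq4)
  also have "\<dots> \<le> 2 * norm (d - b)" using nearer by simp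
  finally have "(norm (a - b))\<^sup>2 \<le> (2 * norm (d - b))\<^sup>2" by (intro power_mono) simp_all
  then show ?thesis by (simp add: power_mult_distrib)
qed

lemma nn_integral_cmult_nonmeasurable:
  fixes c :: ennreal
  assumes c: "c \<noteq> 0" "c \<noteq> top"
  shows "(\<integral>\<^sup>+x. c * g x \<partial>M) = c * integral\<^sup>N M g"
proof -
  let ?simple_below = "\<lambda>f. {h. simple_function M h \<and> h \<le> f}"
  have "?simple_below (\<lambda>x. c * g x) = (\<lambda>h x. c * h x) ` ?simple_below g"
  proof (intro equalityI subsetI)
    fix h assume h: "h \<in> ?simple_below (\<lambda>x. c * g x)"
    have h_eq: "h x = c * (h x / c)" for x
      using c by (metis ennreal_times_divide mult.commute mult_divide_eq_ennreal)
    have "h x / c \<le> g x" for x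
      using h h_eq[of x] ennreal_mult_le_mult_iff[OF c] by (metis le_funD mem_Collect_eq)
    then have "(\<lambda>x. h x / c) \<in> ?simple_below g"
      using h by (auto simp: le_fun_def intro: simple_function_compose1[where g = "\<lambda>y. y / c"])
    moreover have "h = (\<lambda>x. c * (h x / c))"
      using h_eq by (rule ext)
    ultimately show "h \<in> (\<lambda>h x. c * h x) ` ?simple_below g" by (metis image_eqI)
  next
    fix h assume "h \<in> (\<lambda>h x. c * h x) ` ?simple_below g"
    then show "h \<in> ?simple_below (\<lambda>x. c * g x)"
      by (auto simp: le_fun_def intro: mult_left_mono simple_function_compose1[where g = "\<lambda>y. c * y"])
  qed
  then have "(\<integral>\<^sup>+x. c * g x \<partial>M) = (SUP h \<in> (\<lambda>h x. c * h x) ` ?simple_below g. integral\<^sup>S M h)"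
    by (simp add: nn_integral_def)
  also have "\<dots> = (SUP h \<in> ?simple_below g. c * integral\<^sup>S M h)"
    unfolding image_image by (intro SUP_cong) auto
  also have "\<dots> = c * integral\<^sup>N M g"
    by (simp add: nn_integral_def SUP_mult_left_ennreal)
  finally show ?thesis .
qed

theorem corollary1:
  fixes P :: "'w measure"
    and realcase :: bool
    and A :: "complex^'n^'m"
    and x :: "'w \<Rightarrow> complex^'n"
    and ez :: "'w \<Rightarrow> complex^'m"
    and ey :: "'w \<Rightarrow> real^'m"
    and f :: "complex \<Rightarrow> real"
    and Tr :: "real \<Rightarrow> real"
    and y :: "'w \<Rightarrow> real^'m"
    and Tbar :: "real^'m"
    and Kx :: "complex^'n^'n"
    and Tcov :: "real^'m^'m"
    and t :: "'w \<Rightarrow> real^'m"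
    and V :: "'m \<Rightarrow> complex^'n^'n"
    and D :: "'w \<Rightarrow> complex^'n^'n"
    and xhat :: "'w \<Rightarrow> complex^'n"
  assumes prob: "prob_space P"
    and A_H: "A \<in> Hmats realcase"
    and x_meas: "x \<in> borel_measurable P"
    and x_H: "\<forall>\<omega>\<in>space P. x \<omega> \<in> Hvecs realcase"
    and ez_meas: "ez \<in> borel_measurable P"
    and ez_H: "\<forall>\<omega>\<in>space P. ez \<omega> \<in> Hvecs realcase"
    and ey_meas: "ey \<in> borel_measurable P"
    and f_meas: "if realcase then (\<lambda>r. f (complex_of_real r)) \<in> borel_measurable borel
                 else f \<in> borel_measurable borel"
    and y_def: "\<And>\<omega>. y \<omega> = (\<chi> k. f ((A *v x \<omega> + ez \<omega>) $ k) + ey \<omega> $ k)"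
    and Tr_meas: "Tr \<in> borel_measurable borel"
    and Ty_sq: "\<And>k. integrable P (\<lambda>\<omega>. (Tr (y \<omega> $ k))\<^sup>2)"
    and x_4th: "integrable P (\<lambda>\<omega>. (norm (x \<omega>)) ^ 4)"
    and Tbar_def: "Tbar = (\<chi> k. prob_space.expectation P (\<lambda>\<omega>. Tr (y \<omega> $ k)))"
    and Kx_def: "Kx = (\<chi> i j. prob_space.expectation P (\<lambda>\<omega>. x \<omega> $ i * cnj (x \<omega> $ j)))"
    and Tcov_def: "Tcov = (\<chi> k l. prob_space.expectation P
                    (\<lambda>\<omega>. (Tr (y \<omega> $ k) - Tbar $ k) * (Tr (y \<omega> $ l) - Tbar $ l)))"
    and Tcov_full_rank: "rank Tcov = CARD('m)"
    and t_solves: "\<And>\<omega>. Tcov *v t \<omega> = (\<chi> k. Tr (y \<omega> $ k) - Tbar $ k)"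
    and V_def: "\<And>k. V k = (\<chi> i j. prob_space.expectation P
                    (\<lambda>\<omega>. complex_of_real (Tr (y \<omega> $ k) - Tbar $ k) *
                          (x \<omega> $ i * cnj (x \<omega> $ j) - Kx $ i $ j)))"
    and D_def: "\<And>\<omega>. D \<omega> = (\<chi> i j. Kx $ i $ j + (\<Sum>k\<in>UNIV. complex_of_real (t \<omega> $ k) * V k $ i $ j))"
    and xhat_meas: "xhat \<in> borel_measurable P"
    and xhat_min: "\<forall>\<omega>\<in>space P. xhat \<omega> \<in> Hvecs realcase \<and>
                    (\<forall>v\<in>Hvecs realcase. (frob (D \<omega> - outer (xhat \<omega>)))\<^sup>2 \<le> (frob (D \<omega> - outer v))\<^sup>2)"
  shows "(\<integral>\<^sup>+\<omega>. ennreal ((frob (outer (xhat \<omega>) - outer (x \<omega>)))\<^sup>2) \<partial>P)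
           \<le> 4 * (\<integral>\<^sup>+\<omega>. ennreal ((frob (D \<omega> - outer (x \<omega>)))\<^sup>2) \<partial>P)"
proof -
  have pointwise: "(frob (outer (xhat \<omega>) - outer (x \<omega>)))\<^sup>2 \<le> 4 * (frob (D \<omega> - outer (x \<omega>)))\<^sup>2"
    if \<omega>: "\<omega> \<in> space P" for \<omega>
  proof -
    have "(norm (D \<omega> - outer (xhat \<omega>)))\<^sup>2 \<le> (norm (D \<omega> - outer (x \<omega>)))\<^sup>2"
      using xhat_min x_H \<omega> by (simp add: frob_eq_norm)
    then have "norm (D \<omega> - outer (xhat \<omega>)) \<le> norm (D \<omega> - outer (x \<omega>))"
      by (rule power2_le_imp_le) simp
    then show ?thesis by (simp add: frob_eq_norm norm_diff_power2_le_if_nearer)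
  qed
  have "(\<integral>\<^sup>+\<omega>. ennreal ((frob (outer (xhat \<omega>) - outer (x \<omega>)))\<^sup>2) \<partial>P)
      \<le> (\<integral>\<^sup>+\<omega>. 4 * ennreal ((frob (D \<omega> - outer (x \<omega>)))\<^sup>2) \<partial>P)"
    using pointwise by (intro nn_integral_mono) (simp add: numeral_mult_ennreal ennreal_leI)
  also have "\<dots> = 4 * (\<integral>\<^sup>+\<omega>. ennreal ((frob (D \<omega> - outer (x \<omega>)))\<^sup>2) \<partial>P)"
    by (rule nn_integral_cmult_nonmeasurable) simp_all
  finally show ?thesis .
qed

end
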